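(* There is an absolute constant $c_0>0$ such that the following holds. Let $n\ge 2$, $\mathcal F\subseteq S_n$ with $|\mathcal F|=c\,n!$, $0<c<1$, $\eta=\min\{c,1-c\}$, $f=2\chi_{\mathcal F}-1$, $f_1$ its projection onto $U_1$, and $\epsilon=\mathbb E[(f-f_1)^2]$ with $0<\epsilon\le c_0\eta^7$. If $(X,Y)$ is a typical restriction, then either $g_1$ is $(3\epsilon^{1/7},19\epsilon^{1/7})$-almost close to $c-\tfrac12$ and $g_2+c-\tfrac12$ is $(4\epsilon^{1/7},24\epsilon^{1/7})$-almost Boolean, or the same holds with the roles of $g_1$ and $g_2$ interchanged (all on $T_{X,Y}$ with the uniform measure).
   Context: $S_n$ is the symmetric group on $[n]$; $T_{ij}$ is the indicator of $\{\pi:\pi(i)=j\}$; $U_1=\mathrm{span}\{T_{ij}\}$ with inner product $\langle f,g\rangle=\frac1{n!}\sum_\pi f(\pi)g(\pi)$. Let $a_{ij}=(n-1)\langle f,T_{ij}\rangle-\frac{n-2}{n}(2c-1)$. A restriction is $(X,Y)$ with $X,Y\subseteq[n]$, $|X|=|Y|$; $T_{X,Y}=\{\pi:\pi(X)=Y\}$ with uniform measure. For $\pi\in T_{X,Y}$, $g_1(\pi)=\sum_{i\in X}a_{i\pi(i)}$, $g_2(\pi)=\sum_{i\notin X}a_{i\pi(i)}$, $g=g_1+g_2$. A function $\phi$ is $(\delta,\epsilon)$-almost Boolean if $\Pr[||\phi|-1|\le\epsilon]\ge1-\delta$, and $(\delta,\epsilon)$-almost close to $C$ if $\Pr[|\phi-C|\le\epsilon]\ge1-\delta$.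 A restriction is typical if: (a) $g$ is $(\epsilon^{4/7},\epsilon^{1/7})$-almost Boolean; (b) $\mathbb E[g_1],\mathbb E[g_2]$ are within $\epsilon^{1/7}$ of $c-\frac12$; (c) $\mathbb E[(|g|-1)^2]\le\epsilon^{6/7}$. *)

theory Defs
  imports Complex_Main "HOL-Combinatorics.Permutations"
begin

definition Sn :: "nat \<Rightarrow> (nat \<Rightarrow> nat) set" where
  "Sn n = {\<pi>. \<pi> permutes {..<n}}"

definition avg :: "'a set \<Rightarrow> ('a \<Rightarrow> real) \<Rightarrow> real" where
  "avg A \<phi> = (\<Sum>x\<in>A. \<phi> x) / real (card A)"

definition unif_prob :: "'a set \<Rightarrow> ('a \<Rightarrow> bool) \<Rightarrow> real" where
  "unif_prob A P = real (card {x\<in>A. P x}) / real (card A)"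

text \<open>Inner product <f,g> = (1/n!) sum over S_n (card (Sn n) = n!).\<close>
definition inner_Sn :: "nat \<Rightarrow> ((nat \<Rightarrow> nat) \<Rightarrow> real) \<Rightarrow> ((nat \<Rightarrow> nat) \<Rightarrow> real) \<Rightarrow> real" where
  "inner_Sn n f g = avg (Sn n) (\<lambda>\<pi>. f \<pi> * g \<pi>)"

definition Tij :: "nat \<Rightarrow> nat \<Rightarrow> (nat \<Rightarrow> nat) \<Rightarrow> real" where
  "Tij i j = (\<lambda>\<pi>. if \<pi> i = j then 1 else 0)"

text \<open>U_1 = span of the T_ij, as functions on S_n (extended by 0 outside S_n).\<close>
definition U1 :: "nat \<Rightarrow> ((nat \<Rightarrow> nat) \<Rightarrow> real) set" where
  "U1 n = {h. \<exists>w. \<forall>\<pi>. h \<pi> =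
      (if \<pi> \<in> Sn n then (\<Sum>i<n. \<Sum>j<n. w i j * Tij i j \<pi>) else 0)}"

definition proj_U1 :: "nat \<Rightarrow> ((nat \<Rightarrow> nat) \<Rightarrow> real) \<Rightarrow> ((nat \<Rightarrow> nat) \<Rightarrow> real)" where
  "proj_U1 n f = (THE h. h \<in> U1 n \<and>
      (\<forall>i<n. \<forall>j<n. inner_Sn n (\<lambda>\<pi>. f \<pi> - h \<pi>) (Tij i j) = 0))"

definition pm_ind :: "(nat \<Rightarrow> nat) set \<Rightarrow> (nat \<Rightarrow> nat) \<Rightarrow> real" where
  "pm_ind F = (\<lambda>\<pi>. 2 * (if \<pi> \<in> F then 1 else 0) - 1)"

definition coef :: "nat \<Rightarrow> ((nat \<Rightarrow> nat) \<Rightarrow> real) \<Rightarrow> real \<Rightarrow> nat \<Rightarrow> nat \<Rightarrow> real" where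
  "coef n f c i j = (real n - 1) * inner_Sn n f (Tij i j) - (real n - 2) / real n * (2 * c - 1)"

definition TXY :: "nat \<Rightarrow> nat set \<Rightarrow> nat set \<Rightarrow> (nat \<Rightarrow> nat) set" where
  "TXY n X Y = {\<pi> \<in> Sn n. \<pi> ` X = Y}"

definition gfun1 :: "(nat \<Rightarrow> nat \<Rightarrow> real) \<Rightarrow> nat set \<Rightarrow> (nat \<Rightarrow> nat) \<Rightarrow> real" where
  "gfun1 a X \<pi> = (\<Sum>i\<in>X. a i (\<pi> i))"

definition gfun2 :: "nat \<Rightarrow> (nat \<Rightarrow> nat \<Rightarrow> real) \<Rightarrow> nat set \<Rightarrow> (nat \<Rightarrow> nat) \<Rightarrow> real" where
  "gfun2 n a X \<pi> = (\<Sum>i\<in>{..<n} - X. a i (\<pi> i))"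

definition almost_boolean :: "'a set \<Rightarrow> real \<Rightarrow> real \<Rightarrow> ('a \<Rightarrow> real) \<Rightarrow> bool" where
  "almost_boolean A \<delta> \<epsilon> \<phi> \<longleftrightarrow> unif_prob A (\<lambda>x. \<bar>\<bar>\<phi> x\<bar> - 1\<bar> \<le> \<epsilon>) \<ge> 1 - \<delta>"

definition almost_close :: "'a set \<Rightarrow> real \<Rightarrow> real \<Rightarrow> real \<Rightarrow> ('a \<Rightarrow> real) \<Rightarrow> bool" where
  "almost_close A \<delta> \<epsilon> C \<phi> \<longleftrightarrow> unif_prob A (\<lambda>x. \<bar>\<phi> x - C\<bar> \<le> \<epsilon>) \<ge> 1 - \<delta>"

definition typical :: "nat \<Rightarrow> (nat \<Rightarrow> nat \<Rightarrow> real) \<Rightarrow> real \<Rightarrow> real \<Rightarrow> nat set \<Rightarrow> nat set \<Rightarrow> bool" where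
  "typical n a c \<epsilon> X Y \<longleftrightarrow>
     X \<subseteq> {..<n} \<and> Y \<subseteq> {..<n} \<and> card X = card Y \<and>
     (let T = TXY n X Y; g1 = gfun1 a X; g2 = gfun2 n a X; g = (\<lambda>\<pi>. g1 \<pi> + g2 \<pi>) in
       almost_boolean T (\<epsilon> powr (4/7)) (\<epsilon> powr (1/7)) g \<and>
       \<bar>avg T g1 - (c - 1/2)\<bar> \<le> \<epsilon> powr (1/7) \<and>
       \<bar>avg T g2 - (c - 1/2)\<bar> \<le> \<epsilon> powr (1/7) \<and>
       avg T (\<lambda>\<pi>. (\<bar>g \<pi>\<bar> - 1)^2) \<le> \<epsilon> powr (6/7))"

end

theory Submission
  imports Defs
begin

text \<open>
  The proof rests on one structural fact: on a
  restriction, g_1 and g_2 are independent random variables, because a permutation in T_{X,Y}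
  is an arbitrary combination of a bijection X -> Y with a bijection of the complements.
  Everything else is a statement about two independent real observables A, B on a finite set
  with A + B almost Boolean, put t = epsilon^(1/7):
  \<^item> by independence, A or B has at most a 2t^2 proportion of pairs differing by more
    than 2t (otherwise four-point configurations would make A + B non-Boolean too often);
  \<^item> if A is the concentrated side, a suitable value alpha of A is a centre for A, and the
    L^2 bound on |A + B| - 1 controls the outliers of A, so alpha is within 4t of the mean;
  \<^item> hence A is close to c - 1/2 and B + (c - 1/2) is almost Boolean.
\<close>

text \<open>Each permutation in T_{X,Y} splits into its behaviour on X (a bijection X -> Y) and its
  behaviour off X (a bijection [n]-X -> [n]-Y), and these two halves can be chosen freely:
  the merge of p and q takes p on X and q elsewhere.\<close>

definition merge :: "nat set \<Rightarrow> (nat \<Rightarrow> nat) \<Rightarrow> (nat \<Rightarrow> nat) \<Rightarrow> nat \<Rightarrow> nat" where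
  "merge X p q = (\<lambda>i. if i \<in> X then p i else q i)"

lemma merge_in_TXY:
  assumes X: "X \<subseteq> {..<n}" and p: "p \<in> TXY n X Y" and q: "q \<in> TXY n X Y"
  shows "merge X p q \<in> TXY n X Y"
proof -
  have pp: "p permutes {..<n}" and pY: "p ` X = Y" using p by (auto simp: TXY_def Sn_def)
  have qp: "q permutes {..<n}" and qY: "q ` X = Y" using q by (auto simp: TXY_def Sn_def)
  have Y: "Y \<subseteq> {..<n}" using pY X permutes_image[OF pp] by blast
  have "bij_betw p X Y"
    using pY permutes_inj[OF pp] by (auto simp: bij_betw_def inj_on_def inj_def)
  then have on_X: "bij_betw (merge X p q) X Y"
    by (rule bij_betw_cong[THEN iffD1, rotated]) (auto simp: merge_def)
  have "q ` ({..<n} - X) = {..<n} - Y"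
    using permutes_inj[OF qp] permutes_image[OF qp] qY by (simp add: image_set_diff)
  then have "bij_betw q ({..<n} - X) ({..<n} - Y)"
    using permutes_inj[OF qp] by (auto simp: bij_betw_def inj_on_def inj_def)
  then have off_X: "bij_betw (merge X p q) ({..<n} - X) ({..<n} - Y)"
    by (rule bij_betw_cong[THEN iffD1, rotated]) (auto simp: merge_def)
  have "bij_betw (merge X p q) {..<n} {..<n}"
    using bij_betw_combine[OF on_X off_X] X Y by (simp add: Un_absorb1)
  moreover have "merge X p q x = x" if "x \<notin> {..<n}" for x
    using that X qp by (auto simp: merge_def permutes_def)
  ultimately have "merge X p q permutes {..<n}" by (rule bij_imp_permutes)
  moreover have "merge X p q ` X = Y" using pY by (auto simp: merge_def)
  ultimately show ?thesis by (simp add: TXY_def Sn_def)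
qed

lemma gfun1_merge [simp]: "gfun1 a X (merge X p q) = gfun1 a X p"
  by (simp add: gfun1_def merge_def)

lemma gfun2_merge [simp]: "gfun2 n a X (merge X p q) = gfun2 n a X q"
  by (simp add: gfun2_def merge_def)

text \<open>Independence of two real observables A, B under the uniform measure on a finite set T:
  the pair (A p, B q) for independent p, q has the same law as (A p, B p).  Quantifying over
  all test functions H expresses that the joint law is the product of the marginals.\<close>

definition indep_on :: "'a set \<Rightarrow> ('a \<Rightarrow> real) \<Rightarrow> ('a \<Rightarrow> real) \<Rightarrow> bool" where
  "indep_on T A B \<longleftrightarrow> (\<forall>H :: real \<Rightarrow> real \<Rightarrow> real.
     (\<Sum>p\<in>T. \<Sum>q\<in>T. H (A p) (B q)) = real (card T) * (\<Sum>p\<in>T. H (A p) (B p)))"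

lemma indep_onD:
  "indep_on T A B \<Longrightarrow> (\<Sum>p\<in>T. \<Sum>q\<in>T. H (A p) (B q)) = real (card T) * (\<Sum>p\<in>T. H (A p) (B p))"
  by (simp add: indep_on_def)

text \<open>On a restriction T_{X,Y}, g_1 and g_2 are independent: the map (p, q) to
  (merge p q, merge q p) is an involution of T_{X,Y} x T_{X,Y} turning g_1 p, g_2 q into
  g_1 p', g_2 p'.\<close>

lemma indep_on_TXY:
  assumes X: "X \<subseteq> {..<n}"
  shows "indep_on (TXY n X Y) (gfun1 a X) (gfun2 n a X)"
  unfolding indep_on_def
proof
  fix H :: "real \<Rightarrow> real \<Rightarrow> real"
  let ?T = "TXY n X Y" and ?A = "gfun1 a X" and ?B = "gfun2 n a X"
  let ?swap = "\<lambda>(p, q). (merge X p q, merge X q p)"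
  have "(\<Sum>p\<in>?T. \<Sum>q\<in>?T. H (?A p) (?B q)) = (\<Sum>(p, q)\<in>?T \<times> ?T. H (?A p) (?B q))"
    by (simp add: sum.cartesian_product)
  also have "\<dots> = (\<Sum>(p, q)\<in>?T \<times> ?T. H (?A p) (?B p))"
    by (rule sum.reindex_bij_witness[of _ ?swap ?swap])
       (auto simp: merge_in_TXY[OF X], auto simp: merge_def)
  also have "\<dots> = real (card ?T) * (\<Sum>p\<in>?T. H (?A p) (?B p))"
    by (simp add: sum.cartesian_product[symmetric] sum_distrib_left)
  finally show "(\<Sum>p\<in>?T. \<Sum>q\<in>?T. H (?A p) (?B q)) = real (card ?T) * (\<Sum>p\<in>?T. H (?A p) (?B p))" .
qed

lemma indep_on_swap:
  assumes "indep_on T A B" shows "indep_on T B A"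
  unfolding indep_on_def
proof
  fix H :: "real \<Rightarrow> real \<Rightarrow> real"
  show "(\<Sum>p\<in>T. \<Sum>q\<in>T. H (B p) (A q)) = real (card T) * (\<Sum>p\<in>T. H (B p) (A p))"
    using indep_onD[OF assms, of "\<lambda>x y. H y x"] sum.swap[of "\<lambda>p q. H (B p) (A q)" T T] by simp
qed

lemma indep_on_pair_sums:
  fixes A B :: "'a \<Rightarrow> real"
  assumes indep: "indep_on T A B"
  shows "real (card T) ^ 2 * (\<Sum>p\<in>T. \<Sum>q\<in>T. F (A p) (A q) * G (B p) (B q))
    = (\<Sum>p\<in>T. \<Sum>q\<in>T. F (A p) (A q)) * (\<Sum>p\<in>T. \<Sum>q\<in>T. G (B p) (B q))"
proof -
  let ?N = "real (card T)"
  have inner: "?N * (\<Sum>q\<in>T. F (A p) (A q) * G (B p) (B q))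
      = (\<Sum>q\<in>T. \<Sum>q'\<in>T. F (A p) (A q) * G (B p) (B q'))" for p
    using indep_onD[OF indep, of "\<lambda>x y. F (A p) x * G (B p) y"] by simp
  have outer: "?N * (\<Sum>p\<in>T. F (A p) (A q) * G (B p) (B q'))
      = (\<Sum>p\<in>T. \<Sum>p'\<in>T. F (A p) (A q) * G (B p') (B q'))" for q q'
    using indep_onD[OF indep, of "\<lambda>x y. F x (A q) * G y (B q')"] by simp
  have "?N ^ 2 * (\<Sum>p\<in>T. \<Sum>q\<in>T. F (A p) (A q) * G (B p) (B q))
      = ?N * (\<Sum>p\<in>T. ?N * (\<Sum>q\<in>T. F (A p) (A q) * G (B p) (B q)))"
    by (simp only: power2_eq_square sum_distrib_left mult.assoc)
  also have "\<dots> = ?N * (\<Sum>p\<in>T. \<Sum>q\<in>T. \<Sum>q'\<in>T. F (A p) (A q) * G (B p) (B q'))"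
    by (simp only: inner)
  also have "\<dots> = ?N * (\<Sum>q\<in>T. \<Sum>q'\<in>T. \<Sum>p\<in>T. F (A p) (A q) * G (B p) (B q'))"
  proof -
    have "(\<Sum>p\<in>T. \<Sum>q\<in>T. \<Sum>q'\<in>T. F (A p) (A q) * G (B p) (B q'))
        = (\<Sum>q\<in>T. \<Sum>p\<in>T. \<Sum>q'\<in>T. F (A p) (A q) * G (B p) (B q'))"
      by (rule sum.swap)
    also have "\<dots> = (\<Sum>q\<in>T. \<Sum>q'\<in>T. \<Sum>p\<in>T. F (A p) (A q) * G (B p) (B q'))"
      by (rule sum.cong[OF refl], rule sum.swap)
    finally show ?thesis by simp
  qed
  also have "\<dots> = (\<Sum>q\<in>T. \<Sum>q'\<in>T. ?N * (\<Sum>p\<in>T. F (A p) (A q) * G (B p) (B q')))"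
    by (simp only: sum_distrib_left)
  also have "\<dots> = (\<Sum>q\<in>T. \<Sum>q'\<in>T. \<Sum>p\<in>T. \<Sum>p'\<in>T. F (A p) (A q) * G (B p') (B q'))"
    by (simp only: outer)
  also have "\<dots> = (\<Sum>q\<in>T. \<Sum>q'\<in>T. (\<Sum>p\<in>T. F (A p) (A q)) * (\<Sum>p'\<in>T. G (B p') (B q')))"
    by (simp only: sum_product)
  also have "\<dots> = (\<Sum>q\<in>T. (\<Sum>p\<in>T. F (A p) (A q)) * (\<Sum>q'\<in>T. \<Sum>p'\<in>T. G (B p') (B q')))"
    by (simp only: sum_distrib_left)
  also have "\<dots> = (\<Sum>q\<in>T. \<Sum>p\<in>T. F (A p) (A q)) * (\<Sum>q'\<in>T. \<Sum>p'\<in>T. G (B p') (B q'))"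
    by (simp only: sum_distrib_right)
  finally show ?thesis
    using sum.swap[of "\<lambda>q p. F (A p) (A q)" T T] sum.swap[of "\<lambda>q p. G (B p) (B q)" T T] by simp
qed

lemma unif_prob_ge_iff:
  assumes fin: "finite T" and ne: "T \<noteq> {}"
  shows "1 - \<delta> \<le> unif_prob T P \<longleftrightarrow> (\<Sum>x\<in>T. if P x then 0 else 1) \<le> \<delta> * real (card T)"
proof -
  define bad where "bad = (\<Sum>x\<in>T. if P x then 0 else (1::real))"
  have N: "real (card T) > 0" using fin ne by (simp add: card_gt_0_iff)
  have "bad = (\<Sum>x\<in>T. 1 - (if P x then 1 else (0::real)))"
    unfolding bad_def by (intro sum.cong) auto
  also have "\<dots> = real (card T) - real (card {x\<in>T. P x})"
    using fin by (simp add: sum_subtractf sum.If_cases Int_def)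
  finally have "unif_prob T P = (real (card T) - bad) / real (card T)"
    by (simp add: unif_prob_def)
  then show ?thesis
    using N by (simp add: pos_le_divide_eq left_diff_distrib bad_def)
qed

definition far_pairs :: "'a set \<Rightarrow> ('a \<Rightarrow> real) \<Rightarrow> real \<Rightarrow> real" where
  "far_pairs T A r = (\<Sum>p\<in>T. \<Sum>q\<in>T. if r < \<bar>A p - A q\<bar> then 1 else 0)"

lemma four_sums_not_near_pm1:
  fixes a a' b b' t :: real
  assumes "0 < t" "t < 1/2" "2*t < \<bar>a - a'\<bar>" "2*t < \<bar>b - b'\<bar>"
    "\<bar>\<bar>a+b\<bar> - 1\<bar> \<le> t" "\<bar>\<bar>a'+b'\<bar> - 1\<bar> \<le> t" "\<bar>\<bar>a+b'\<bar> - 1\<bar> \<le> t" "\<bar>\<bar>a'+b\<bar> - 1\<bar> \<le> t"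
  shows False
  using assms unfolding abs_real_def by argo

text \<open>By
  independence, the proportion of pairs (p, q) on which both A and B spread equals the product
  of the two far-pair proportions; on each such pair A + B fails to be near -1 or 1 at one of
  the four combinations (p,p), (q,q), (p,q), (q,p), each of which is non-Boolean with
  probability at most t^4, so the product is at most 4t^4.\<close>

lemma one_side_concentrated:
  fixes A B :: "'a \<Rightarrow> real"
  assumes fin: "finite T" and ne: "T \<noteq> {}" and indep: "indep_on T A B"
    and t: "0 < t" "t < 1/2"
    and bool: "almost_boolean T (t^4) t (\<lambda>p. A p + B p)"
  shows "far_pairs T A (2*t) \<le> 2 * t^2 * real (card T) ^ 2
       \<or> far_pairs T B (2*t) \<le> 2 * t^2 * real (card T) ^ 2"
proof (rule ccontr)
  let ?N = "real (card T)"
  let ?far = "\<lambda>x y::real. if 2*t < \<bar>x - y\<bar> then 1 else (0::real)"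
  let ?bad = "\<lambda>x::real. if \<bar>\<bar>x\<bar> - 1\<bar> \<le> t then 0 else (1::real)"
  define b where "b = (\<Sum>p\<in>T. ?bad (A p + B p))"
  assume "\<not> ?thesis"
  then have farA: "2 * t^2 * ?N^2 < far_pairs T A (2*t)"
    and farB: "2 * t^2 * ?N^2 < far_pairs T B (2*t)" by auto
  have b_le: "b \<le> t^4 * ?N"
    using bool unif_prob_ge_iff[OF fin ne] by (simp add: almost_boolean_def b_def)
  have pointwise: "?far (A p) (A q) * ?far (B p) (B q)
     \<le> ?bad (A p + B p) + ?bad (A q + B q) + ?bad (A p + B q) + ?bad (A q + B p)" for p q
  proof (cases "2*t < \<bar>A p - A q\<bar> \<and> 2*t < \<bar>B p - B q\<bar>")
    case True
    then have "\<not> (\<bar>\<bar>A p + B p\<bar> - 1\<bar> \<le> t \<and> \<bar>\<bar>A q + B q\<bar> - 1\<bar> \<le> t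
                \<and> \<bar>\<bar>A p + B q\<bar> - 1\<bar> \<le> t \<and> \<bar>\<bar>A q + B p\<bar> - 1\<bar> \<le> t)"
      using four_sums_not_near_pm1[OF t, of "A p" "A q" "B p" "B q"] by blast
    then show ?thesis using True by auto
  qed auto
  have diag1: "(\<Sum>p\<in>T. \<Sum>q\<in>T. ?bad (A p + B p)) = ?N * b"
    by (simp add: b_def sum_distrib_left mult.commute)
  have diag2: "(\<Sum>p\<in>T. \<Sum>q\<in>T. ?bad (A q + B q)) = ?N * b"
    by (simp add: b_def)
  have mixed1: "(\<Sum>p\<in>T. \<Sum>q\<in>T. ?bad (A p + B q)) = ?N * b"
    unfolding b_def using indep_onD[OF indep, of "\<lambda>x y. ?bad (x+y)"] by simp
  have mixed2: "(\<Sum>p\<in>T. \<Sum>q\<in>T. ?bad (A q + B p)) = ?N * b"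
    using mixed1 sum.swap[of "\<lambda>p q. ?bad (A q + B p)" T T] by simp
  have "far_pairs T A (2*t) * far_pairs T B (2*t)
      = ?N^2 * (\<Sum>p\<in>T. \<Sum>q\<in>T. ?far (A p) (A q) * ?far (B p) (B q))"
    unfolding far_pairs_def using indep_on_pair_sums[OF indep, of ?far ?far] by simp
  also have "\<dots> \<le> ?N^2 * (\<Sum>p\<in>T. \<Sum>q\<in>T.
      ?bad (A p + B p) + ?bad (A q + B q) + ?bad (A p + B q) + ?bad (A q + B p))"
    by (intro mult_left_mono sum_mono pointwise) simp
  also have "\<dots> = ?N^2 * (4 * ?N * b)"
    using diag1 diag2 mixed1 mixed2 by (simp add: sum.distrib)
  also have "\<dots> \<le> ?N^2 * (4 * ?N * (t^4 * ?N))"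
    using b_le by (intro mult_left_mono) auto
  also have "\<dots> = (2 * t^2 * ?N^2) * (2 * t^2 * ?N^2)"
    by (simp add: power2_eq_square power4_eq_xxxx)
  also have "\<dots> < far_pairs T A (2*t) * far_pairs T B (2*t)"
  proof -
    have nonneg: "0 \<le> 2 * t^2 * ?N^2" by simp
    moreover have "0 < far_pairs T A (2*t)" using nonneg farA by linarith
    ultimately show ?thesis by (intro mult_strict_mono farA farB)
  qed
  finally show False by simp
qed

lemma abs_le_quadratic_bound:
  fixes x s :: real assumes "0 < s"
  shows "\<bar>x\<bar> \<le> 1 + s/2 + (\<bar>x\<bar> - 1)^2 / (2*s)"
proof -
  have "0 \<le> (\<bar>x\<bar> - 1 - s)^2" by simp
  then have "2 * s * (\<bar>x\<bar> - 1) \<le> (\<bar>x\<bar> - 1)^2 + s^2"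
    by (simp add: power2_eq_square algebra_simps)
  then show ?thesis using assms by (simp add: field_simps power2_eq_square)
qed

lemma weighted_abs_sum_le:
  fixes f w :: "'a \<Rightarrow> real"
  assumes t: "0 < t" and w: "\<And>p. 0 \<le> w p" "\<And>p. w p \<le> 1"
    and L2: "(\<Sum>p\<in>T. (\<bar>f p\<bar> - 1)^2) \<le> t^6 * real (card T)"
  shows "(\<Sum>p\<in>T. w p * \<bar>f p\<bar>) \<le> (1 + t^3/2) * (\<Sum>p\<in>T. w p) + real (card T) * (t^3/2)"
proof -
  have t3: "0 < t^3" using t by simp
  have "w p * \<bar>f p\<bar> \<le> w p * (1 + t^3/2) + (\<bar>f p\<bar> - 1)^2 / (2*t^3)" for p
  proof -
    have "w p * \<bar>f p\<bar> \<le> w p * (1 + t^3/2 + (\<bar>f p\<bar> - 1)^2 / (2*t^3))"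
      using abs_le_quadratic_bound[OF t3] w by (intro mult_left_mono)
    also have "\<dots> \<le> w p * (1 + t^3/2) + (\<bar>f p\<bar> - 1)^2 / (2*t^3)"
      using mult_left_le_one_le[of "(\<bar>f p\<bar> - 1)^2 / (2*t^3)" "w p"] w[of p] t3
      by (simp add: distrib_left)
    finally show ?thesis .
  qed
  then have "(\<Sum>p\<in>T. w p * \<bar>f p\<bar>)
      \<le> (\<Sum>p\<in>T. w p * (1 + t^3/2) + (\<bar>f p\<bar> - 1)^2 / (2*t^3))"
    by (rule sum_mono)
  also have "\<dots> = (1 + t^3/2) * (\<Sum>p\<in>T. w p) + (\<Sum>p\<in>T. (\<bar>f p\<bar> - 1)^2) / (2*t^3)"
    by (simp add: sum.distrib sum_distrib_right sum_divide_distrib mult.commute)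
  also have "\<dots> \<le> (1 + t^3/2) * (\<Sum>p\<in>T. w p) + t^6 * real (card T) / (2*t^3)"
    using L2 t3 by (simp add: divide_right_mono)
  also have "t^6 * real (card T) / (2*t^3) = real (card T) * (t^3/2)"
    using t3 by (simp add: field_simps power_add[symmetric])
  finally show ?thesis .
qed

text \<open>When A has few far pairs, some value alpha = A p0 of A is a good centre: few A q are far
  from alpha, and alpha + B q is small on average.  Found by averaging both quantities over p0
  (the second via independence and the weighted L^1 bound).\<close>

lemma exists_good_center:
  fixes A B :: "'a \<Rightarrow> real"
  assumes fin: "finite T" and ne: "T \<noteq> {}" and indep: "indep_on T A B"
    and t: "0 < t" "t < 1"
    and L2: "(\<Sum>p\<in>T. (\<bar>A p + B p\<bar> - 1)^2) \<le> t^6 * real (card T)"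
    and conc: "far_pairs T A (2*t) \<le> 2 * t^2 * real (card T) ^ 2"
  obtains \<alpha> where "(\<Sum>q\<in>T. if 2*t < \<bar>A q - \<alpha>\<bar> then 1 else 0) < 4 * t^2 * real (card T)"
    and "(\<Sum>q\<in>T. \<bar>\<alpha> + B q\<bar>) < 4 * real (card T)"
proof -
  let ?N = "real (card T)"
  define Q where "Q p = (\<Sum>q\<in>T. if 2*t < \<bar>A q - A p\<bar> then 1 else (0::real))" for p
  define R where "R p = (\<Sum>q\<in>T. \<bar>A p + B q\<bar>)" for p
  define h where "h p = Q p / (4 * t^2 * ?N) + R p / (4 * ?N)" for p
  have N: "0 < ?N" using fin ne by (simp add: card_gt_0_iff)
  have Q_nonneg: "0 \<le> Q p" and R_nonneg: "0 \<le> R p" for p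
    unfolding Q_def R_def by (auto intro: sum_nonneg)
  have sumQ: "(\<Sum>p\<in>T. Q p) \<le> 2 * t^2 * ?N^2"
    using conc by (simp add: Q_def far_pairs_def abs_minus_commute)
  have "(\<Sum>p\<in>T. \<bar>A p + B p\<bar>) \<le> ?N * (1 + t^3)"
    using weighted_abs_sum_le[where w="\<lambda>_. 1" and f="\<lambda>p. A p + B p"] t L2 by (simp add: algebra_simps)
  moreover have "(\<Sum>p\<in>T. R p) = ?N * (\<Sum>p\<in>T. \<bar>A p + B p\<bar>)"
    unfolding R_def using indep_onD[OF indep, of "\<lambda>x y. \<bar>x + y\<bar>"] by simp
  ultimately have sumR: "(\<Sum>p\<in>T. R p) \<le> ?N * (?N * (1 + t^3))"
    using N by (simp add: mult_left_mono)
  have "t^3 < 1" using t power_strict_mono[of t 1 3] by simp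
  have "(\<Sum>p\<in>T. h p) = (\<Sum>p\<in>T. Q p) / (4 * t^2 * ?N) + (\<Sum>p\<in>T. R p) / (4 * ?N)"
    by (simp add: h_def sum.distrib sum_divide_distrib)
  also have "\<dots> \<le> (2 * t^2 * ?N^2) / (4 * t^2 * ?N) + (?N * (?N * (1 + t^3))) / (4 * ?N)"
    using sumQ sumR N t by (intro add_mono divide_right_mono) auto
  also have "\<dots> = ?N / 2 + ?N * (1 + t^3) / 4"
    using N t by (simp add: field_simps power2_eq_square)
  also have "\<dots> < ?N"
    using N \<open>t^3 < 1\<close> by (simp add: field_simps)
  finally have "\<exists>p\<in>T. h p < 1"
    using sum_mono[of T "\<lambda>_. 1" h] by (force simp: not_less)
  then obtain p0 where "h p0 < 1" by blast
  moreover have "0 \<le> Q p0 / (4 * t^2 * ?N)" and "0 \<le> R p0 / (4 * ?N)"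
    using Q_nonneg[of p0] R_nonneg[of p0] N by simp_all
  ultimately have "Q p0 / (4 * t^2 * ?N) < 1" and "R p0 / (4 * ?N) < 1"
    unfolding h_def by linarith+
  then have "Q p0 < 4 * t^2 * ?N" and "R p0 < 4 * ?N"
    using N t by (simp_all add: pos_divide_less_eq)
  then show ?thesis
    by (intro that[of "A p0"]) (simp_all add: Q_def R_def add.commute)
qed

text \<open>Controlling deviations of A from a centre alpha through the partner B: by the triangle
  inequality |A p - alpha| <= |A p + B q| + |alpha + B q| for every q, and averaging over q
  uses independence to replace B q by B p.\<close>

lemma deviation_via_partner:
  fixes A B :: "'a \<Rightarrow> real" and \<phi> :: "real \<Rightarrow> real"
  assumes indep: "indep_on T A B" and \<phi>: "\<And>x. 0 \<le> \<phi> x"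
  shows "real (card T) * (\<Sum>p\<in>T. \<phi> (A p) * \<bar>A p - \<alpha>\<bar>)
     \<le> real (card T) * (\<Sum>p\<in>T. \<phi> (A p) * \<bar>A p + B p\<bar>) + (\<Sum>p\<in>T. \<phi> (A p)) * (\<Sum>q\<in>T. \<bar>\<alpha> + B q\<bar>)"
proof -
  have "real (card T) * (\<Sum>p\<in>T. \<phi> (A p) * \<bar>A p - \<alpha>\<bar>) = (\<Sum>p\<in>T. \<Sum>q\<in>T. \<phi> (A p) * \<bar>A p - \<alpha>\<bar>)"
    by (simp add: sum_distrib_left)
  also have "\<dots> \<le> (\<Sum>p\<in>T. \<Sum>q\<in>T. \<phi> (A p) * \<bar>A p + B q\<bar> + \<phi> (A p) * \<bar>\<alpha> + B q\<bar>)"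
  proof (intro sum_mono)
    fix p q
    have "\<bar>A p - \<alpha>\<bar> \<le> \<bar>A p + B q\<bar> + \<bar>\<alpha> + B q\<bar>" by linarith
    then show "\<phi> (A p) * \<bar>A p - \<alpha>\<bar> \<le> \<phi> (A p) * \<bar>A p + B q\<bar> + \<phi> (A p) * \<bar>\<alpha> + B q\<bar>"
      using \<phi> by (simp add: mult_left_mono flip: distrib_left)
  qed
  also have "\<dots> = (\<Sum>p\<in>T. \<Sum>q\<in>T. \<phi> (A p) * \<bar>A p + B q\<bar>) + (\<Sum>p\<in>T. \<phi> (A p)) * (\<Sum>q\<in>T. \<bar>\<alpha> + B q\<bar>)"
    by (simp add: sum.distrib sum_product)
  also have "(\<Sum>p\<in>T. \<Sum>q\<in>T. \<phi> (A p) * \<bar>A p + B q\<bar>) = real (card T) * (\<Sum>p\<in>T. \<phi> (A p) * \<bar>A p + B p\<bar>)"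
    using indep_onD[OF indep, of "\<lambda>x y. \<phi> x * \<bar>x + y\<bar>"] by simp
  finally show ?thesis .
qed

lemma small_t_estimate:
  fixes t :: real assumes "0 < t" "t \<le> 1/100"
  shows "4 * t^2 * (5 + t^3/2) + t^3/2 \<le> t/4"
proof -
  have t2: "t^2 \<le> t/100" using assms by (simp add: power2_eq_square mult_left_le)
  have "t^3 = t * t^2" by (simp add: power3_eq_cube power2_eq_square)
  also have "\<dots> \<le> 1 * t^2" using assms by (intro mult_right_mono) auto
  finally have t3: "t^3 \<le> t/100" using t2 by simp
  have "4 * t^2 * (5 + t^3/2) \<le> 4 * (t/100) * (5 + 1/2)"
    using t2 t3 assms by (intro mult_mono) auto
  then show ?thesis using t3 assms by simp
qed

text \<open>The points where A is far from a good centre alpha contribute at most t/4 on average to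
  |A - alpha|; this excludes that a few huge values of A move its mean.\<close>

lemma far_deviation_le:
  fixes A B :: "'a \<Rightarrow> real"
  assumes fin: "finite T" and ne: "T \<noteq> {}" and indep: "indep_on T A B"
    and t: "0 < t" "t \<le> 1/100"
    and L2: "(\<Sum>p\<in>T. (\<bar>A p + B p\<bar> - 1)^2) \<le> t^6 * real (card T)"
    and far: "(\<Sum>q\<in>T. if 2*t < \<bar>A q - \<alpha>\<bar> then 1 else 0) < 4 * t^2 * real (card T)"
    and partner: "(\<Sum>q\<in>T. \<bar>\<alpha> + B q\<bar>) < 4 * real (card T)"
  shows "(\<Sum>p\<in>T. (if 2*t < \<bar>A p - \<alpha>\<bar> then 1 else 0) * \<bar>A p - \<alpha>\<bar>) \<le> real (card T) * (t/4)"
proof -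
  let ?N = "real (card T)"
  define \<phi> where "\<phi> x = (if 2*t < \<bar>x - \<alpha>\<bar> then 1 else (0::real))" for x
  define Q where "Q = (\<Sum>p\<in>T. \<phi> (A p))"
  define S where "S = (\<Sum>p\<in>T. \<phi> (A p) * \<bar>A p - \<alpha>\<bar>)"
  have N: "0 < ?N" using fin ne by (simp add: card_gt_0_iff)
  have Q: "0 \<le> Q" "Q < 4 * t^2 * ?N" using far by (simp_all add: Q_def \<phi>_def sum_nonneg)
  have "?N * S \<le> ?N * (\<Sum>p\<in>T. \<phi> (A p) * \<bar>A p + B p\<bar>) + Q * (\<Sum>q\<in>T. \<bar>\<alpha> + B q\<bar>)"
    unfolding S_def Q_def by (rule deviation_via_partner[OF indep]) (simp add: \<phi>_def)
  also have "\<dots> \<le> ?N * ((1 + t^3/2) * Q + ?N * (t^3/2)) + Q * (4 * ?N)"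
    using weighted_abs_sum_le[where w="\<lambda>p. \<phi> (A p)" and f="\<lambda>p. A p + B p", OF t(1) _ _ L2]
      N Q partner
    by (intro add_mono mult_left_mono) (auto simp: \<phi>_def Q_def)
  also have "\<dots> = ?N * (Q * (5 + t^3/2) + ?N * (t^3/2))" by (simp add: algebra_simps)
  finally have "S \<le> Q * (5 + t^3/2) + ?N * (t^3/2)"
    using N by (simp only: mult_le_cancel_left_pos)
  also have "\<dots> \<le> (4 * t^2 * ?N) * (5 + t^3/2) + ?N * (t^3/2)"
    using Q t by (intro add_right_mono mult_right_mono) auto
  also have "\<dots> = ?N * (4 * t^2 * (5 + t^3/2) + t^3/2)" by (simp add: algebra_simps)
  also have "\<dots> \<le> ?N * (t/4)" using small_t_estimate[OF t] N by (intro mult_left_mono) auto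
  finally show ?thesis by (simp add: S_def \<phi>_def)
qed

lemma mean_near_center:
  fixes A B :: "'a \<Rightarrow> real"
  assumes fin: "finite T" and ne: "T \<noteq> {}" and indep: "indep_on T A B"
    and t: "0 < t" "t \<le> 1/100"
    and L2: "(\<Sum>p\<in>T. (\<bar>A p + B p\<bar> - 1)^2) \<le> t^6 * real (card T)"
    and far: "(\<Sum>q\<in>T. if 2*t < \<bar>A q - \<alpha>\<bar> then 1 else 0) < 4 * t^2 * real (card T)"
    and partner: "(\<Sum>q\<in>T. \<bar>\<alpha> + B q\<bar>) < 4 * real (card T)"
  shows "\<bar>avg T A - \<alpha>\<bar> \<le> 3*t"
proof -
  let ?N = "real (card T)"
  have N: "0 < ?N" using fin ne by (simp add: card_gt_0_iff)
  have "(\<Sum>p\<in>T. \<bar>A p - \<alpha>\<bar>) \<le> (\<Sum>p\<in>T. 2*t + (if 2*t < \<bar>A p - \<alpha>\<bar> then 1 else 0) * \<bar>A p - \<alpha>\<bar>)"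
    using t by (intro sum_mono) auto
  also have "\<dots> = ?N * (2*t) + (\<Sum>p\<in>T. (if 2*t < \<bar>A p - \<alpha>\<bar> then 1 else 0) * \<bar>A p - \<alpha>\<bar>)"
    by (simp add: sum.distrib)
  also have "\<dots> \<le> ?N * (2*t) + ?N * (t/4)"
    using far_deviation_le[OF assms] by (rule add_left_mono)
  finally have dev: "(\<Sum>p\<in>T. \<bar>A p - \<alpha>\<bar>) \<le> ?N * (2*t + t/4)" by (simp add: algebra_simps)
  have "avg T A - \<alpha> = (\<Sum>p\<in>T. A p - \<alpha>) / ?N"
    using N by (simp add: avg_def sum_subtractf field_simps)
  then have "\<bar>avg T A - \<alpha>\<bar> \<le> (\<Sum>p\<in>T. \<bar>A p - \<alpha>\<bar>) / ?N"
    using N by (simp add: divide_right_mono sum_abs)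
  also have "\<dots> \<le> 2*t + t/4" using dev N by (simp add: pos_divide_le_eq mult.commute)
  finally show ?thesis using t by simp
qed

lemma concentrated_side:
  fixes A B :: "'a \<Rightarrow> real"
  assumes fin: "finite T" and ne: "T \<noteq> {}" and indep: "indep_on T A B"
    and t: "0 < t" "t \<le> 1/100"
    and bool: "almost_boolean T (t^4) t (\<lambda>p. A p + B p)"
    and L2: "avg T (\<lambda>p. (\<bar>A p + B p\<bar> - 1)^2) \<le> t^6"
    and mean: "\<bar>avg T A - \<mu>\<bar> \<le> t"
    and conc: "far_pairs T A (2*t) \<le> 2 * t^2 * real (card T) ^ 2"
  shows "almost_close T (3*t) (19*t) \<mu> A \<and> almost_boolean T (4*t) (24*t) (\<lambda>p. B p + \<mu>)"
proof -
  let ?N = "real (card T)"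
  let ?far = "\<lambda>\<alpha> p. if 2*t < \<bar>A p - \<alpha>\<bar> then 1 else (0::real)"
  let ?bad = "\<lambda>p. if \<bar>\<bar>A p + B p\<bar> - 1\<bar> \<le> t then 0 else (1::real)"
  have N: "0 < ?N" using fin ne by (simp add: card_gt_0_iff)
  have L2_sum: "(\<Sum>p\<in>T. (\<bar>A p + B p\<bar> - 1)^2) \<le> t^6 * ?N"
    using L2 N by (simp add: avg_def pos_divide_le_eq)
  obtain \<alpha> where far: "(\<Sum>p\<in>T. ?far \<alpha> p) < 4 * t^2 * ?N"
    and partner: "(\<Sum>q\<in>T. \<bar>\<alpha> + B q\<bar>) < 4 * ?N"
    using exists_good_center[OF fin ne indep t(1) _ L2_sum conc] t by auto
  have center: "\<bar>\<alpha> - \<mu>\<bar> \<le> 4*t"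
    using mean_near_center[OF fin ne indep t L2_sum far partner] mean by linarith
  have "(\<Sum>p\<in>T. ?far \<alpha> p) \<le> 4 * t^2 * ?N" using far by simp
  also have "\<dots> \<le> 3 * t * ?N" using t N by (intro mult_right_mono) (simp_all add: power2_eq_square)
  finally have far_small: "(\<Sum>p\<in>T. ?far \<alpha> p) \<le> 3 * t * ?N" .
  have "(\<Sum>p\<in>T. ?bad p) \<le> t^4 * ?N"
    using bool unif_prob_ge_iff[OF fin ne] by (simp add: almost_boolean_def)
  also have "\<dots> \<le> t * ?N" using power_decreasing[of 1 4 t] t N by (intro mult_right_mono) auto
  finally have bad_small: "(\<Sum>p\<in>T. ?bad p) \<le> t * ?N" .
  have "(\<Sum>p\<in>T. if \<bar>A p - \<mu>\<bar> \<le> 19*t then 0 else 1) \<le> (\<Sum>p\<in>T. ?far \<alpha> p)"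
    using center t by (intro sum_mono) auto
  then have A_close: "almost_close T (3*t) (19*t) \<mu> A"
    using far_small unif_prob_ge_iff[OF fin ne] by (simp add: almost_close_def)
  have "(\<Sum>p\<in>T. if \<bar>\<bar>B p + \<mu>\<bar> - 1\<bar> \<le> 24*t then 0 else 1) \<le> (\<Sum>p\<in>T. ?far \<alpha> p + ?bad p)"
  proof (intro sum_mono)
    fix p
    have "\<bar>\<bar>B p + \<mu>\<bar> - 1\<bar> \<le> 24*t" if "\<bar>A p - \<alpha>\<bar> \<le> 2*t" "\<bar>\<bar>A p + B p\<bar> - 1\<bar> \<le> t"
      using that center t unfolding abs_real_def by argo
    then show "(if \<bar>\<bar>B p + \<mu>\<bar> - 1\<bar> \<le> 24*t then 0 else 1) \<le> ?far \<alpha> p + ?bad p"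
      by auto
  qed
  then have B_bool: "almost_boolean T (4*t) (24*t) (\<lambda>p. B p + \<mu>)"
    using far_small bad_small unif_prob_ge_iff[OF fin ne]
    by (simp add: almost_boolean_def sum.distrib)
  show ?thesis using A_close B_bool ..
qed

text \<open>Here t = epsilon^(1/7), so
  the typicality bounds read t^4, t and t^6.\<close>

lemma typical_restriction_splits:
  fixes \<epsilon> :: real
  assumes eps: "0 < \<epsilon>" "\<epsilon> \<le> (1/100)^7" and restr: "typical n a c \<epsilon> X Y"
  shows "let T = TXY n X Y; g1 = gfun1 a X; g2 = gfun2 n a X in
      (almost_close T (3 * \<epsilon> powr (1/7)) (19 * \<epsilon> powr (1/7)) (c - 1/2) g1 \<and>
       almost_boolean T (4 * \<epsilon> powr (1/7)) (24 * \<epsilon> powr (1/7)) (\<lambda>\<pi>. g2 \<pi> + c - 1/2)) \<or>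
      (almost_close T (3 * \<epsilon> powr (1/7)) (19 * \<epsilon> powr (1/7)) (c - 1/2) g2 \<and>
       almost_boolean T (4 * \<epsilon> powr (1/7)) (24 * \<epsilon> powr (1/7)) (\<lambda>\<pi>. g1 \<pi> + c - 1/2))"
proof -
  define T where "T = TXY n X Y"
  define A where "A = gfun1 a X"
  define B where "B = gfun2 n a X"
  define t where "t = \<epsilon> powr (1/7)"
  have t_pow: "t ^ k = \<epsilon> powr (k/7)" for k :: nat
    using eps by (simp add: t_def powr_power)
  have "0 < t" using eps by (simp add: t_def)
  moreover have "t^7 \<le> (1/100)^7" using eps t_pow[of 7] by simp
  ultimately have t: "0 < t" "t \<le> 1/100" using power_mono_iff[of t "1/100" 7] by auto
  have X: "X \<subseteq> {..<n}" using restr by (simp add: typical_def)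
  have fin: "finite T"
    using finite_permutations[of "{..<n}"] by (rule finite_subset[rotated]) (auto simp: T_def TXY_def Sn_def)
  have bool: "almost_boolean T (t^4) t (\<lambda>p. A p + B p)"
    and mean_A: "\<bar>avg T A - (c - 1/2)\<bar> \<le> t" and mean_B: "\<bar>avg T B - (c - 1/2)\<bar> \<le> t"
    and L2: "avg T (\<lambda>p. (\<bar>A p + B p\<bar> - 1)^2) \<le> t^6"
    using restr t_pow[of 4] t_pow[of 6]
    by (simp_all add: typical_def Let_def T_def A_def B_def flip: t_def)
  have "t^4 < 1" using t power_strict_mono[of t 1 4] by simp
  then have ne: "T \<noteq> {}" using bool by (auto simp: almost_boolean_def unif_prob_def)
  have indep: "indep_on T A B" unfolding T_def A_def B_def by (rule indep_on_TXY[OF X])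
  have bool': "almost_boolean T (t^4) t (\<lambda>p. B p + A p)"
    and L2': "avg T (\<lambda>p. (\<bar>B p + A p\<bar> - 1)^2) \<le> t^6"
    using bool L2 by (simp_all add: add.commute)
  have shift: "(\<lambda>\<pi>. F \<pi> + c - 1/2) = (\<lambda>p. F p + (c - 1/2))" for F :: "(nat \<Rightarrow> nat) \<Rightarrow> real"
    by (simp add: algebra_simps)
  from one_side_concentrated[OF fin ne indep t(1) _ bool] t
  consider "far_pairs T A (2*t) \<le> 2 * t^2 * real (card T) ^ 2"
    | "far_pairs T B (2*t) \<le> 2 * t^2 * real (card T) ^ 2" by linarith
  then show ?thesis
  proof cases
    case 1
    from concentrated_side[OF fin ne indep t bool L2 mean_A this]
    show ?thesis by (simp add: shift T_def A_def B_def t_def)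
  next
    case 2
    from concentrated_side[OF fin ne indep_on_swap[OF indep] t bool' L2' mean_B this]
    show ?thesis by (simp add: shift T_def A_def B_def t_def)
  qed
qed

text \<open>The main statement, with c_0 = 100^(-7): since eta <= 1, the hypothesis on epsilon
  implies epsilon <= 100^(-7).\<close>

theorem lemma2p7:
  shows "\<exists>c0::real. c0 > 0 \<and>
    (\<forall>n::nat. \<forall>F c. n \<ge> 2 \<longrightarrow> F \<subseteq> Sn n \<longrightarrow> real (card F) = c * fact n \<longrightarrow>
       0 < c \<longrightarrow> c < 1 \<longrightarrow>
       (let \<eta> = min c (1 - c); f = pm_ind F; f1 = proj_U1 n f;
            \<epsilon> = avg (Sn n) (\<lambda>\<pi>. (f \<pi> - f1 \<pi>)^2); a = coef n f c in
        0 < \<epsilon> \<longrightarrow> \<epsilon> \<le> c0 * \<eta>^7 \<longrightarrow>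
        (\<forall>X Y. typical n a c \<epsilon> X Y \<longrightarrow>
          (let T = TXY n X Y; g1 = gfun1 a X; g2 = gfun2 n a X in
            (almost_close T (3 * \<epsilon> powr (1/7)) (19 * \<epsilon> powr (1/7)) (c - 1/2) g1 \<and>
             almost_boolean T (4 * \<epsilon> powr (1/7)) (24 * \<epsilon> powr (1/7)) (\<lambda>\<pi>. g2 \<pi> + c - 1/2)) \<or>
            (almost_close T (3 * \<epsilon> powr (1/7)) (19 * \<epsilon> powr (1/7)) (c - 1/2) g2 \<and>
             almost_boolean T (4 * \<epsilon> powr (1/7)) (24 * \<epsilon> powr (1/7)) (\<lambda>\<pi>. g1 \<pi> + c - 1/2))))))"
  unfolding Let_def
proof (intro exI[of _ "(1/100::real)^7"] conjI allI impI, goal_cases)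
  case 1
  show ?case by simp
next
  case (2 n F c X Y)
  let ?\<epsilon> = "avg (Sn n) (\<lambda>\<pi>. (pm_ind F \<pi> - proj_U1 n (pm_ind F) \<pi>)^2)"
  have "min c (1 - c) ^ 7 \<le> 1" using 2 by (intro power_le_one) auto
  then have "(1/100::real)^7 * min c (1 - c) ^ 7 \<le> (1/100)^7" by (rule mult_left_le) simp
  then have small: "?\<epsilon> \<le> (1/100)^7" using 2 by linarith
  from typical_restriction_splits[OF 2(6) small 2(8)] show ?case by (simp only: Let_def)
qed

end
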